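(* Let $f:\mathbb{R}^n\to\mathbb{R}$ be differentiable with $L$-Lipschitz gradient in the Euclidean norm, i.e. $\|\nabla f(y)-\nabla f(x)\|\le L\|y-x\|$ for all $x,y$ (some $L>0$), and satisfy the Polyak--Łojasiewicz condition $f(x)-f^*\le \frac{1}{2\mu}\|\nabla f(x)\|^2$ for all $x\in\mathbb{R}^n$, with some $\mu>0$, where $f^*=f(x^* )$ for a minimizer $x^*$ of $f$. Suppose that an inexact gradient $\tilde\nabla f(x)$ is available satisfying $\|\tilde\nabla f(x)-\nabla f(x)\|\le \alpha\|\nabla f(x)\|$ for all $x$, with a known $\alpha\in[0,0.5)$. Let $\varepsilon>0$, and set $\xi=(1-2\alpha)^2$ and $L_{max}=2L$. Run Algorithm 1 (described in the context) and suppose one of the following holds: (1) the algorithm has performed $N_*$ iterations, where $N_*=\left\lceil \frac{L_{max}}{\mu\xi}\log\left(\frac{\mu(f(x^0)-f^* )}{\varepsilon}\right)\right\rceil$; or (2) for some $N<N_*$ the stopping rule $\|\tilde\nabla f(x^N)\|^2\le 2\varepsilon(1-\alpha)^2$ holds. Then the output point $\hat x$ (namely $\hat x=x^{N_*}$ in case (1), $\hat x=x^N$ in case (2)) satisfies $$f(\hat x)-f^*\le\frac{\varepsilon}{\mu}\quad\text{and}\quad \|\hat x-x^0\|\le \frac{2L_{max}}{\mu\xi}\sqrt{\frac{2}{L_{min}}\bigl(f(x^0)-f^*\bigr)}.$$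
   Context: Algorithm 1 (gradient descent with adaptive tuning of $L$). Input: $x^0\in\mathbb{R}^n$, constants $L_{min}\ge\mu>0$, $L_0\ge L_{min}$, and $\alpha\in[0,0.5)$. Step 1: set $k=0$. Step 2: set $L_{k+1}=\max\{L_k/2,\,L_{min}\}$. Step 3: set $x^{k+1}=x^k-\frac{1}{L_{k+1}}\frac{1-2\alpha}{1-\alpha}\tilde\nabla f(x^k)$. Step 4: if $$f(x^{k+1})\le f(x^k)+\langle\tilde\nabla f(x^k),x^{k+1}-x^k\rangle+\frac{L_{k+1}}{2}\|x^{k+1}-x^k\|^2+\frac{\alpha}{1-\alpha}\|\tilde\nabla f(x^k)\|\,\|x^{k+1}-x^k\|,$$ go to Step 5; otherwise replace $L_{k+1}$ by $2L_{k+1}$ and return to Step 3. Step 5: if the stopping rule is not satisfied, set $k:=k+1$ and go to Step 2. Output: $x^k$. Here $\log$ is the natural logarithm and $\|\cdot\|$ the Euclidean norm. *)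

theory Defs
  imports "HOL-Analysis.Analysis"
begin

text \<open>Algorithm 1 (gradient descent with adaptive tuning of L), with inexact
  gradient gt.  Step 3 trial point for a given trial constant Lt.\<close>

definition gd_step :: "('a::real_inner \<Rightarrow> 'a) \<Rightarrow> real \<Rightarrow> 'a \<Rightarrow> real \<Rightarrow> 'a" where
  "gd_step gt \<alpha> x Lt = x - ((1 / Lt) * ((1 - 2*\<alpha>) / (1 - \<alpha>))) *\<^sub>R gt x"

definition gd_accept :: "('a::real_inner \<Rightarrow> real) \<Rightarrow> ('a \<Rightarrow> 'a) \<Rightarrow> real \<Rightarrow> 'a \<Rightarrow> real \<Rightarrow> bool" where
  "gd_accept f gt \<alpha> x Lt =
     (let y = gd_step gt \<alpha> x Lt in
      f y \<le> f x + inner (gt x) (y - x) + Lt / 2 * (norm (y - x))^2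
              + \<alpha> / (1 - \<alpha>) * norm (gt x) * norm (y - x))"

definition gd_nextL :: "('a::real_inner \<Rightarrow> real) \<Rightarrow> ('a \<Rightarrow> 'a) \<Rightarrow> real \<Rightarrow> real \<Rightarrow> 'a \<Rightarrow> real \<Rightarrow> real" where
  "gd_nextL f gt \<alpha> Lmin x Lk =
     (let Lt = max (Lk / 2) Lmin in Lt * 2 ^ (LEAST i. gd_accept f gt \<alpha> x (Lt * 2 ^ i)))"

primrec gd_state :: "('a::real_inner \<Rightarrow> real) \<Rightarrow> ('a \<Rightarrow> 'a) \<Rightarrow> real \<Rightarrow> real \<Rightarrow> 'a \<Rightarrow> real \<Rightarrow> nat \<Rightarrow> 'a \<times> real" where
  "gd_state f gt \<alpha> Lmin x0 L0 0 = (x0, L0)"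
| "gd_state f gt \<alpha> Lmin x0 L0 (Suc k) =
     (let (x, Lk) = gd_state f gt \<alpha> Lmin x0 L0 k;
          L' = gd_nextL f gt \<alpha> Lmin x Lk
      in (gd_step gt \<alpha> x L', L'))"

definition gd_iter :: "('a::real_inner \<Rightarrow> real) \<Rightarrow> ('a \<Rightarrow> 'a) \<Rightarrow> real \<Rightarrow> real \<Rightarrow> 'a \<Rightarrow> real \<Rightarrow> nat \<Rightarrow> 'a" where
  "gd_iter f gt \<alpha> Lmin x0 L0 k = fst (gd_state f gt \<alpha> Lmin x0 L0 k)"

end

theory Submission imports Defs begin

(* Every trial constant Lt >= L passes the acceptance test (descent lemma plus the relative
   gradient error), so the backtracking keeps Lmin <= L_k <= 2L, and an accepted step
   decreases f by at least L_k/2 |x^k - x^(k-1)|^2.  The step length is c |gt| / L_k with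
   c = (1 - 2 alpha) / (1 - alpha) and c |gt| >= (1 - 2 alpha) |grad|, so the PL inequality
   turns this decrease into the linear rate f(x^k) - f(xstar) <= (1 - rho)^k (f(x^0) - f(xstar)),
   rho = mu xi / L_max, and (1 - rho)^N <= exp(-rho N) gives N_star.  The same decrease
   bounds the k-th step length by sqrt(2 (f(x^k) - f(xstar)) / Lmin), a geometric sequence
   of ratio sqrt(1 - rho) <= 1 - rho/2, whose sum is at most
   2/rho sqrt(2 (f(x^0) - f(xstar)) / Lmin).  Under the stopping rule,
   |grad| <= |gt| / (1 - alpha) and PL bound the gap directly. *)

lemma descent_lemma:
  fixes f :: "'a::real_inner \<Rightarrow> real" and grad :: "'a \<Rightarrow> 'a"
  assumes deriv: "\<And>x. (f has_derivative (\<lambda>h. inner (grad x) h)) (at x)"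
    and lip: "\<And>x y. norm (grad y - grad x) \<le> L * norm (y - x)"
  shows "f y \<le> f x + inner (grad x) (y - x) + L / 2 * (norm (y - x))^2"
proof -
  define d where "d = y - x"
  define \<phi> where "\<phi> t = f (x + t *\<^sub>R d) - t * inner (grad x) d - L / 2 * t^2 * (norm d)^2" for t
  have \<phi>_deriv: "DERIV \<phi> t :> inner (grad (x + t *\<^sub>R d)) d - inner (grad x) d - L * t * (norm d)^2"
    for t
  proof -
    have "((\<lambda>t. x + t *\<^sub>R d) has_derivative (\<lambda>s. s *\<^sub>R d)) (at t)"
      by (auto intro!: derivative_eq_intros)
    from has_derivative_compose[OF this deriv]
    have f_deriv: "((\<lambda>t. f (x + t *\<^sub>R d)) has_field_derivative inner (grad (x + t *\<^sub>R d)) d) (at t)"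
      by (auto simp: o_def mult.commute intro: has_derivative_imp_has_field_derivative)
    show ?thesis
      unfolding \<phi>_def by (rule derivative_eq_intros f_deriv | simp)+
  qed
  have "\<phi> 1 \<le> \<phi> 0"
  proof (rule DERIV_nonpos_imp_nonincreasing[of 0 1 \<phi>])
    fix t :: real assume t: "0 \<le> t" "t \<le> 1"
    have "inner (grad (x + t *\<^sub>R d)) d - inner (grad x) d = inner (grad (x + t *\<^sub>R d) - grad x) d"
      by (simp add: inner_diff_left)
    also have "\<dots> \<le> norm (grad (x + t *\<^sub>R d) - grad x) * norm d"
      by (rule norm_cauchy_schwarz)
    also have "\<dots> \<le> L * norm (t *\<^sub>R d) * norm d"
      using lip[of x "x + t *\<^sub>R d"] by (intro mult_right_mono) (auto simp: norm_minus_commute)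
    also have "\<dots> = L * t * (norm d)^2"
      using t by (simp add: power2_eq_square)
    finally show "\<exists>y. DERIV \<phi> t :> y \<and> y \<le> 0"
      using \<phi>_deriv[of t] by auto
  qed simp
  then show ?thesis
    unfolding \<phi>_def d_def by simp
qed

lemma norm_ge_of_relative_error:
  fixes u v :: "'a::real_normed_vector"
  assumes "norm (u - v) \<le> \<alpha> * norm v"
  shows "(1 - \<alpha>) * norm v \<le> norm u"
  using norm_triangle_ineq4[of u "u - v"] assms by (simp add: algebra_simps)

lemma geometric_decay_le:
  fixes u :: "nat \<Rightarrow> real"
  assumes "\<And>k. u (Suc k) \<le> r * u k" and "0 \<le> r"
  shows "u k \<le> r ^ k * u 0"
proof (induction k)
  case (Suc k)
  have "u (Suc k) \<le> r * u k" by (rule assms(1))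
  also have "\<dots> \<le> r * (r ^ k * u 0)"
    using Suc assms(2) by (rule mult_left_mono)
  finally show ?case by simp
qed simp

lemma one_minus_power_ceiling_ln_le:
  fixes a E \<delta> :: real
  assumes a: "0 < a" "a \<le> 1" and E: "0 \<le> E" and \<delta>: "0 < \<delta>"
  shows "(1 - a) ^ nat \<lceil>ln (E / \<delta>) / a\<rceil> * E \<le> \<delta>"
proof (cases "E = 0")
  case False
  define N where "N = nat \<lceil>ln (E / \<delta>) / a\<rceil>"
  have "ln (E / \<delta>) / a \<le> real N"
    unfolding N_def by linarith
  then have ln_le: "ln (E / \<delta>) \<le> a * real N"
    using a by (simp add: field_simps)
  have "(1 - a) ^ N \<le> exp (- a) ^ N"
    using a exp_ge_add_one_self[of "- a"] by (intro power_mono) auto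
  also have "\<dots> = exp (- (a * real N))"
    by (simp add: exp_of_nat_mult[symmetric] mult.commute)
  also have "\<dots> \<le> exp (- ln (E / \<delta>))"
    using ln_le by simp
  also have "\<dots> = \<delta> / E"
    using E False \<delta> by (simp add: exp_minus)
  finally show ?thesis
    using E False unfolding N_def by (simp add: field_simps)
qed (use \<delta> in simp)

lemma sum_sqrt_geometric_le:
  fixes a C :: real
  assumes a: "0 < a" "a \<le> 1" and C: "0 \<le> C"
  shows "(\<Sum>k<N. sqrt (C * (1 - a) ^ k)) \<le> 2 / a * sqrt C"
proof -
  define q where "q = sqrt (1 - a)"
  have "1 - a \<le> (1 - a / 2)^2"
    by (simp add: power2_eq_square algebra_simps)
  then have q: "0 \<le> q" "q \<le> 1 - a / 2"
    unfolding q_def using a by (auto intro: real_le_lsqrt)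
  have "(\<Sum>k<N. sqrt (C * (1 - a) ^ k)) = sqrt C * (1 - q ^ N) / (1 - q)"
    using q a by (simp add: q_def real_sqrt_mult real_sqrt_power sum_distrib_left[symmetric]
        sum_gp_strict)
  also have "\<dots> \<le> sqrt C / (1 - q)"
    using q a C by (intro divide_right_mono mult_left_le) auto
  also have "\<dots> \<le> 2 / a * sqrt C"
  proof -
    have "1 / (1 - q) \<le> 2 / a"
      using q a by (simp add: field_simps)
    from mult_right_mono[OF this real_sqrt_ge_zero[OF C]] show ?thesis
      by simp
  qed
  finally show ?thesis .
qed

lemma least_doubling_bounds:
  fixes P :: "real \<Rightarrow> bool"
  assumes large: "\<And>t. L \<le> t \<Longrightarrow> P t" and t0: "0 < t0"
  obtains t where "t = t0 * 2 ^ (LEAST i. P (t0 * 2 ^ i))"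
    and "P t" and "t0 \<le> t" and "t \<le> max t0 (2 * L)"
proof -
  define i where "i = (LEAST i. P (t0 * 2 ^ i))"
  obtain n :: nat where "L / t0 < 2 ^ n"
    using real_arch_pow[of 2 "L / t0"] by auto
  then have "P (t0 * 2 ^ n)"
    using t0 by (intro large) (simp add: field_simps)
  then have "P (t0 * 2 ^ i)"
    unfolding i_def by (rule LeastI)
  moreover have "t0 * 2 ^ i \<le> max t0 (2 * L)"
  proof (cases i)
    case (Suc j)
    have "\<not> P (t0 * 2 ^ j)"
      using not_less_Least[of j "\<lambda>i. P (t0 * 2 ^ i)"] Suc unfolding i_def by simp
    then have "t0 * 2 ^ j < L"
      using large by (meson not_le)
    then show ?thesis
      unfolding Suc by simp
  qed simp
  ultimately show thesis
    using that[of "t0 * 2 ^ i"] t0 unfolding i_def by simp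
qed

lemma norm_gd_step:
  assumes "\<alpha> < 1/2" and "0 < Lt"
  shows "norm (gd_step gt \<alpha> x Lt - x) = (1 - 2*\<alpha>) / (1 - \<alpha>) * norm (gt x) / Lt"
  using assms by (simp add: gd_step_def)

lemma gd_accept_if_ge_lipschitz:
  fixes f :: "'a::real_inner \<Rightarrow> real" and grad gt :: "'a \<Rightarrow> 'a"
  assumes deriv: "\<And>x. (f has_derivative (\<lambda>h. inner (grad x) h)) (at x)"
    and lip: "\<And>x y. norm (grad y - grad x) \<le> L * norm (y - x)"
    and inexact: "norm (gt x - grad x) \<le> \<alpha> * norm (grad x)"
    and \<alpha>: "0 \<le> \<alpha>" "\<alpha> < 1/2" and L_le: "L \<le> Lt"
  shows "gd_accept f gt \<alpha> x Lt"
proof -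
  define d where "d = gd_step gt \<alpha> x Lt - x"
  have "(1 - \<alpha>) * norm (grad x) \<le> norm (gt x)"
    using inexact by (rule norm_ge_of_relative_error)
  then have grad_le: "\<alpha> * norm (grad x) \<le> \<alpha> / (1 - \<alpha>) * norm (gt x)"
    using \<alpha> mult_left_mono[of "(1 - \<alpha>) * norm (grad x)" "norm (gt x)" "\<alpha> / (1 - \<alpha>)"]
    by simp
  have "inner (grad x) d = inner (gt x) d + inner (grad x - gt x) d"
    by (simp add: inner_diff_left)
  also have "inner (grad x - gt x) d \<le> norm (grad x - gt x) * norm d"
    by (rule norm_cauchy_schwarz)
  also have "\<dots> \<le> \<alpha> / (1 - \<alpha>) * norm (gt x) * norm d"
    using inexact grad_le by (intro mult_right_mono) (auto simp: norm_minus_commute)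
  finally have "inner (grad x) d \<le> inner (gt x) d + \<alpha> / (1 - \<alpha>) * norm (gt x) * norm d"
    by simp
  moreover have "L / 2 * (norm d)^2 \<le> Lt / 2 * (norm d)^2"
    using L_le by (intro mult_right_mono) auto
  moreover have "f (x + d) \<le> f x + inner (grad x) d + L / 2 * (norm d)^2"
    using descent_lemma[OF deriv lip, where x = x and y = "x + d"] by simp
  ultimately show ?thesis
    unfolding gd_accept_def Let_def d_def by simp
qed

lemma gd_step_sufficient_decrease:
  assumes accept: "gd_accept f gt \<alpha> x Lt" and \<alpha>: "\<alpha> < 1/2" and Lt: "0 < Lt"
  shows "f (gd_step gt \<alpha> x Lt) \<le> f x - Lt / 2 * (norm (gd_step gt \<alpha> x Lt - x))^2"
proof -
  define c where "c = (1 - 2*\<alpha>) / (1 - \<alpha>)"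
  define h where "h = c / Lt"
  have "0 < c"
    using \<alpha> unfolding c_def by simp
  then have h: "0 < h" "Lt * h = c"
    using Lt unfolding h_def by simp_all
  have step: "gd_step gt \<alpha> x Lt - x = - (h *\<^sub>R gt x)"
    unfolding gd_step_def h_def c_def by simp
  have ratio: "\<alpha> / (1 - \<alpha>) = 1 - c"
    using \<alpha> unfolding c_def by (simp add: field_simps)
  have inner_step: "inner (gt x) (gd_step gt \<alpha> x Lt - x) = - h * (norm (gt x))^2"
    unfolding step by (simp add: power2_norm_eq_inner)
  have norm_step: "norm (gd_step gt \<alpha> x Lt - x) = h * norm (gt x)"
    unfolding step using h by simp
  have "f (gd_step gt \<alpha> x Lt) \<le> f x + inner (gt x) (gd_step gt \<alpha> x Lt - x)
      + Lt / 2 * (norm (gd_step gt \<alpha> x Lt - x))^2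
      + \<alpha> / (1 - \<alpha>) * norm (gt x) * norm (gd_step gt \<alpha> x Lt - x)"
    using accept unfolding gd_accept_def Let_def .
  also have "\<dots> = f x - h * (norm (gt x))^2 + Lt / 2 * (h * norm (gt x))^2
      + (1 - c) * h * (norm (gt x))^2"
    unfolding inner_step norm_step ratio by (simp add: power2_eq_square)
  also have "\<dots> = f x - Lt / 2 * (h * norm (gt x))^2"
    unfolding h(2)[symmetric] by (simp add: power2_eq_square algebra_simps)
  finally show ?thesis
    unfolding norm_step .
qed

locale inexact_gd =
  fixes f :: "'a::real_inner \<Rightarrow> real" and grad gt :: "'a \<Rightarrow> 'a"
    and L \<alpha> Lmin L0 :: real and x0 :: 'a
  assumes deriv: "\<And>x. (f has_derivative (\<lambda>h. inner (grad x) h)) (at x)"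
    and lip: "\<And>x y. norm (grad y - grad x) \<le> L * norm (y - x)"
    and inexact: "\<And>x. norm (gt x - grad x) \<le> \<alpha> * norm (grad x)"
    and alpha_nonneg: "0 \<le> \<alpha>" and alpha_less: "\<alpha> < 1/2"
    and Lmin_pos: "0 < Lmin" and Lmin_le: "Lmin \<le> 2 * L" and L0_le: "L0 \<le> 2 * L"
begin

abbreviation iter :: "nat \<Rightarrow> 'a" where
  "iter \<equiv> gd_iter f gt \<alpha> Lmin x0 L0"

definition Lseq :: "nat \<Rightarrow> real" where
  "Lseq k = snd (gd_state f gt \<alpha> Lmin x0 L0 k)"

lemma iter_0: "iter 0 = x0"
  by (simp add: gd_iter_def)

lemma iter_Suc: "iter (Suc k) = gd_step gt \<alpha> (iter k) (Lseq (Suc k))"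
  and Lseq_Suc: "Lseq (Suc k) = gd_nextL f gt \<alpha> Lmin (iter k) (Lseq k)"
  by (simp_all add: gd_iter_def Lseq_def Let_def split_beta)

lemma Lseq_Suc_bounds_if:
  assumes "Lseq k \<le> 2 * L"
  shows "Lmin \<le> Lseq (Suc k)" and "Lseq (Suc k) \<le> 2 * L"
    and "gd_accept f gt \<alpha> (iter k) (Lseq (Suc k))"
proof -
  define t0 where "t0 = max (Lseq k / 2) Lmin"
  have large: "\<And>t. L \<le> t \<Longrightarrow> gd_accept f gt \<alpha> (iter k) t"
    using gd_accept_if_ge_lipschitz[OF deriv lip inexact alpha_nonneg alpha_less] .
  have t0: "0 < t0" "Lmin \<le> t0" "max t0 (2 * L) \<le> 2 * L"
    using assms Lmin_pos Lmin_le unfolding t0_def by auto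
  obtain t where t: "t = t0 * 2 ^ (LEAST i. gd_accept f gt \<alpha> (iter k) (t0 * 2 ^ i))"
    and bounds: "gd_accept f gt \<alpha> (iter k) t" "t0 \<le> t" "t \<le> max t0 (2 * L)"
    by (rule least_doubling_bounds[where P = "gd_accept f gt \<alpha> (iter k)", OF large t0(1)])
  have "Lseq (Suc k) = t"
    unfolding t Lseq_Suc gd_nextL_def t0_def Let_def ..
  then show "Lmin \<le> Lseq (Suc k)" "Lseq (Suc k) \<le> 2 * L"
    "gd_accept f gt \<alpha> (iter k) (Lseq (Suc k))"
    using bounds t0 by auto
qed

lemma Lseq_le: "Lseq k \<le> 2 * L"
proof (induction k)
  case 0
  show ?case
    using L0_le by (simp add: Lseq_def)
next
  case (Suc k)
  then show ?case
    by (rule Lseq_Suc_bounds_if(2))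
qed

lemmas Lseq_Suc_bounds = Lseq_Suc_bounds_if[OF Lseq_le]

lemma Lseq_Suc_pos: "0 < Lseq (Suc k)"
  using Lseq_Suc_bounds(1) Lmin_pos by (rule order.strict_trans2[rotated])

lemma iter_descent:
  "f (iter (Suc k)) \<le> f (iter k) - Lseq (Suc k) / 2 * (norm (iter (Suc k) - iter k))^2"
  unfolding iter_Suc
  by (rule gd_step_sufficient_decrease[OF Lseq_Suc_bounds(3) alpha_less Lseq_Suc_pos])

lemma norm_iter_step:
  "norm (iter (Suc k) - iter k) = (1 - 2*\<alpha>) / (1 - \<alpha>) * norm (gt (iter k)) / Lseq (Suc k)"
  unfolding iter_Suc by (rule norm_gd_step[OF alpha_less Lseq_Suc_pos])

end

locale inexact_gd_pl = inexact_gd +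
  fixes \<mu> :: real and xstar :: 'a
  assumes mu_pos: "0 < \<mu>" and mu_le_Lmin: "\<mu> \<le> Lmin"
    and minimizer: "\<And>x. f xstar \<le> f x"
    and PL: "\<And>x. f x - f xstar \<le> 1 / (2 * \<mu>) * (norm (grad x))^2"
begin

definition rate :: real where
  "rate = \<mu> * (1 - 2*\<alpha>)^2 / (2 * L)"

lemma rate_pos: "0 < rate" and rate_le_one: "rate \<le> 1"
proof -
  have L: "0 < L" "\<mu> \<le> 2 * L"
    using mu_pos mu_le_Lmin Lmin_le by linarith+
  have "(1 - 2*\<alpha>)^2 \<le> 1"
    using alpha_nonneg alpha_less by (simp add: power_le_one)
  then have "\<mu> * (1 - 2*\<alpha>)^2 \<le> 2 * L"
    using mu_pos L by (metis mult_left_le less_eq_real_def order_trans zero_le_power2)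
  then show "0 < rate" "rate \<le> 1"
    using mu_pos alpha_less L unfolding rate_def by simp_all
qed

lemma gap_Suc_le: "f (iter (Suc k)) - f xstar \<le> (1 - rate) * (f (iter k) - f xstar)"
proof -
  define c where "c = (1 - 2*\<alpha>) / (1 - \<alpha>)"
  define Lt where "Lt = Lseq (Suc k)"
  have Lt: "0 < Lt" "Lt \<le> 2 * L"
    unfolding Lt_def using Lseq_Suc_pos Lseq_Suc_bounds(2) .
  have "c * ((1 - \<alpha>) * norm (grad (iter k))) \<le> c * norm (gt (iter k))"
    using norm_ge_of_relative_error[OF inexact] alpha_less unfolding c_def
    by (intro mult_left_mono) auto
  then have "(1 - 2*\<alpha>) * norm (grad (iter k)) \<le> c * norm (gt (iter k))"
    using alpha_less unfolding c_def by simp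
  moreover have "0 \<le> (1 - 2*\<alpha>) * norm (grad (iter k))"
    using alpha_less by simp
  ultimately have grad_le: "(1 - 2*\<alpha>)^2 * (norm (grad (iter k)))^2 \<le> (c * norm (gt (iter k)))^2"
    by (metis power_mono power_mult_distrib)
  have PL_k: "2 * \<mu> * (f (iter k) - f xstar) \<le> (norm (grad (iter k)))^2"
    using PL[of "iter k"] mu_pos by (simp add: field_simps)
  have "rate * (f (iter k) - f xstar) = (1 - 2*\<alpha>)^2 * (2 * \<mu> * (f (iter k) - f xstar)) / (4 * L)"
    unfolding rate_def by simp
  also have "\<dots> \<le> (1 - 2*\<alpha>)^2 * (norm (grad (iter k)))^2 / (4 * L)"
    using PL_k Lt by (intro divide_right_mono mult_left_mono) auto
  also have "\<dots> \<le> (c * norm (gt (iter k)))^2 / (4 * L)"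
    using grad_le Lt by (simp add: divide_right_mono)
  also have "\<dots> \<le> (c * norm (gt (iter k)))^2 / (2 * Lt)"
    using Lt by (intro divide_left_mono) auto
  also have "\<dots> = Lt / 2 * (norm (iter (Suc k) - iter k))^2"
    unfolding norm_iter_step Lt_def[symmetric] c_def[symmetric] using Lt
    by (simp add: power2_eq_square field_simps)
  finally show ?thesis
    using iter_descent[of k] unfolding Lt_def by (simp add: algebra_simps)
qed

lemma gap_le: "f (iter k) - f xstar \<le> (1 - rate) ^ k * (f x0 - f xstar)"
  using geometric_decay_le[of "\<lambda>k. f (iter k) - f xstar", OF gap_Suc_le] rate_le_one
  by (simp add: iter_0)

lemma norm_iter_step_le: "norm (iter (Suc k) - iter k) \<le> sqrt (2 / Lmin * (f (iter k) - f xstar))"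
proof -
  define Lt where "Lt = Lseq (Suc k)"
  have Lt: "0 < Lt" "Lmin \<le> Lt"
    unfolding Lt_def using Lseq_Suc_pos Lseq_Suc_bounds(1) .
  have "Lt / 2 * (norm (iter (Suc k) - iter k))^2 \<le> f (iter k) - f xstar"
    using iter_descent[of k] minimizer[of "iter (Suc k)"] unfolding Lt_def by simp
  then have "(norm (iter (Suc k) - iter k))^2 \<le> 2 / Lt * (f (iter k) - f xstar)"
    using Lt by (simp add: field_simps)
  also have "\<dots> \<le> 2 / Lmin * (f (iter k) - f xstar)"
    using Lt Lmin_pos minimizer[of "iter k"] by (intro mult_right_mono divide_left_mono) auto
  finally show ?thesis
    by (simp add: real_le_rsqrt)
qed

lemma dist_iter_le: "norm (iter N - x0) \<le> 2 / rate * sqrt (2 / Lmin * (f x0 - f xstar))"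
proof -
  have "norm (iter N - x0) = norm (\<Sum>k<N. iter (Suc k) - iter k)"
    by (simp add: sum_lessThan_telescope iter_0)
  also have "\<dots> \<le> (\<Sum>k<N. norm (iter (Suc k) - iter k))"
    by (rule norm_sum)
  also have "\<dots> \<le> (\<Sum>k<N. sqrt (2 / Lmin * (f x0 - f xstar) * (1 - rate) ^ k))"
  proof (rule sum_mono)
    fix k
    have "2 / Lmin * (f (iter k) - f xstar) \<le> 2 / Lmin * ((1 - rate) ^ k * (f x0 - f xstar))"
      using gap_le[of k] Lmin_pos by (intro mult_left_mono) auto
    also have "\<dots> = 2 / Lmin * (f x0 - f xstar) * (1 - rate) ^ k"
      by (simp only: ac_simps)
    finally have "2 / Lmin * (f (iter k) - f xstar) \<le> 2 / Lmin * (f x0 - f xstar) * (1 - rate) ^ k" .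
    then show "norm (iter (Suc k) - iter k) \<le> sqrt (2 / Lmin * (f x0 - f xstar) * (1 - rate) ^ k)"
      using norm_iter_step_le[of k] real_sqrt_le_mono order_trans by blast
  qed
  also have "\<dots> \<le> 2 / rate * sqrt (2 / Lmin * (f x0 - f xstar))"
    using rate_pos rate_le_one Lmin_pos minimizer[of x0] by (intro sum_sqrt_geometric_le) auto
  finally show ?thesis .
qed

lemma gap_iter_le:
  assumes "0 < \<epsilon>"
  shows "f (iter (nat \<lceil>ln (\<mu> * (f x0 - f xstar) / \<epsilon>) / rate\<rceil>)) - f xstar \<le> \<epsilon> / \<mu>"
proof -
  define N where "N = nat \<lceil>ln (\<mu> * (f x0 - f xstar) / \<epsilon>) / rate\<rceil>"
  have "(1 - rate) ^ N * (\<mu> * (f x0 - f xstar)) \<le> \<epsilon>"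
    unfolding N_def using rate_pos rate_le_one mu_pos minimizer[of x0] assms
    by (intro one_minus_power_ceiling_ln_le) auto
  then have "(1 - rate) ^ N * (f x0 - f xstar) \<le> \<epsilon> / \<mu>"
    using mu_pos by (simp add: field_simps)
  with gap_le[of N] show ?thesis
    unfolding N_def by linarith
qed

lemma gap_le_if_stopping:
  assumes "(norm (gt z))^2 \<le> 2 * \<epsilon> * (1 - \<alpha>)^2"
  shows "f z - f xstar \<le> \<epsilon> / \<mu>"
proof -
  have "((1 - \<alpha>) * norm (grad z))^2 \<le> (norm (gt z))^2"
    using norm_ge_of_relative_error[OF inexact] alpha_less by (intro power_mono) auto
  with assms have "(1 - \<alpha>)^2 * (norm (grad z))^2 \<le> (1 - \<alpha>)^2 * (2 * \<epsilon>)"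
    by (simp only: power_mult_distrib ac_simps)
  then have "(norm (grad z))^2 \<le> 2 * \<epsilon>"
    using alpha_less by simp
  with PL[of z] mu_pos show ?thesis
    by (simp add: field_simps)
qed

end

theorem theorem1:
  fixes f :: "real ^ 'n \<Rightarrow> real"
    and grad gt :: "real ^ 'n \<Rightarrow> real ^ 'n"
    and xstar x0 :: "real ^ 'n"
    and L \<mu> \<alpha> \<epsilon> Lmin L0 :: real
  assumes deriv: "\<And>x. (f has_derivative (\<lambda>h. inner (grad x) h)) (at x)"
    and Lpos: "L > 0"
    and lip: "\<And>x y. norm (grad y - grad x) \<le> L * norm (y - x)"
    and mupos: "\<mu> > 0"
    and minimizer: "\<And>x. f xstar \<le> f x"
    and PL: "\<And>x. f x - f xstar \<le> 1 / (2 * \<mu>) * (norm (grad x))^2"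
    and alpha: "0 \<le> \<alpha>" "\<alpha> < 1/2"
    and inexact: "\<And>x. norm (gt x - grad x) \<le> \<alpha> * norm (grad x)"
    and eps: "\<epsilon> > 0"
    and Lmin: "Lmin \<ge> \<mu>"
    and L0: "L0 \<ge> Lmin" "L0 \<le> 2 * L"
  defines "x \<equiv> gd_iter f gt \<alpha> Lmin x0 L0"
    and "Nstar \<equiv> nat \<lceil>(2 * L) / (\<mu> * (1 - 2*\<alpha>)^2) * ln (\<mu> * (f x0 - f xstar) / \<epsilon>)\<rceil>"
    and "R \<equiv> 2 * (2 * L) / (\<mu> * (1 - 2*\<alpha>)^2) * sqrt (2 / Lmin * (f x0 - f xstar))"
  shows "(f (x Nstar) - f xstar \<le> \<epsilon> / \<mu> \<and> norm (x Nstar - x0) \<le> R)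
       \<and> (\<forall>N < Nstar. (norm (gt (x N)))^2 \<le> 2 * \<epsilon> * (1 - \<alpha>)^2 \<longrightarrow>
            f (x N) - f xstar \<le> \<epsilon> / \<mu> \<and> norm (x N - x0) \<le> R)"
proof -
  interpret inexact_gd_pl f grad gt L \<alpha> Lmin L0 x0 \<mu> xstar
    using assms by unfold_locales auto
  have Nstar: "Nstar = nat \<lceil>ln (\<mu> * (f x0 - f xstar) / \<epsilon>) / rate\<rceil>"
    unfolding Nstar_def rate_def by (simp add: mult.commute)
  have dist: "norm (x N - x0) \<le> R" for N
    using dist_iter_le[of N] unfolding x_def R_def rate_def by simp
  show ?thesis
    using gap_iter_le[OF eps] gap_le_if_stopping dist unfolding x_def Nstar by blast
qed

end
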